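(* For every integer $k\ge 1$, $$\delta(k)=\tfrac12 k+O(\log k)\qquad (k\to\infty),$$ where $\delta(k)$ is as defined in the context. That is, there is an absolute constant $C$ such that $|\delta(k)-\tfrac12 k|\le C\log(k+1)$ for all $k\ge1$.
   Context: A function $f:\mathbb{N}\to\{+1,-1\}$ is completely multiplicative if $f(ab)=f(a)f(b)$ for all $a,b\in\mathbb{N}$. For an integer $q>1$ and a real-valued (i.e. $\{0,\pm1\}$-valued) Dirichlet character $\chi_q$ modulo $q$ (principal or not, primitive or not), a modified character $\tilde\chi_q$ is the completely multiplicative function $\mathbb{N}\to\{+1,-1\}$ defined on primes by $\tilde\chi_q(p)=\chi_q(p)$ if $p\nmid q$, and $\tilde\chi_q(p)=\eta(p)$ if $p\mid q$, where $\eta(p)\in\{+1,-1\}$ is an arbitrary choice of sign for each prime $p\mid q$. For such $\tilde\chi_q$ and $k\ge1$ set $$\delta(\tilde\chi_q;k)=\min_{n\in\mathbb{N}\cup\{0\}}\#\{1\le m\le k:\ \tilde\chi_q(n+m)=-1\},$$ the least number of $-1$ values of $\tilde\chi_q$ in a block of $k$ consecutive positive integers (this is the number of primes at which $\tilde\chi_q$ must be modified so that it takes the value $+1$ at $k$ consecutive integers). Define $\delta(k)=\sup\delta(\tilde\chi_q;k)$, the supremum over all integers $q>1$, all real Dirichlet characters $\chi_q$ mod $q$ and all sign choices $\eta$. *)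

theory Defs
  imports "HOL-Analysis.Analysis" "HOL-Computational_Algebra.Primes"
begin

definition real_dirichlet_char :: "nat \<Rightarrow> (nat \<Rightarrow> int) \<Rightarrow> bool" where
  "real_dirichlet_char q chi \<longleftrightarrow>
     (\<forall>n. chi n \<in> {-1, 0, 1}) \<and>
     (\<forall>a b. chi (a * b) = chi a * chi b) \<and>
     (\<forall>n. chi (n + q) = chi n) \<and>
     chi 1 = 1 \<and>
     (\<forall>n. chi n = 0 \<longleftrightarrow> \<not> coprime n q)"

text \<open>A modified character: a completely multiplicative function on the positive
integers with values +1/-1 that agrees with chi at every prime not dividing q
(the values at primes dividing q are the arbitrary signs eta(p)).
The value at 0 is irrelevant and unconstrained.\<close>
definition modified_char :: "nat \<Rightarrow> (nat \<Rightarrow> int) \<Rightarrow> (nat \<Rightarrow> int) \<Rightarrow> bool" where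
  "modified_char q chi f \<longleftrightarrow>
     (\<forall>n>0. f n \<in> {-1, 1}) \<and>
     (\<forall>a b. a > 0 \<longrightarrow> b > 0 \<longrightarrow> f (a * b) = f a * f b) \<and>
     (\<forall>p. prime p \<and> \<not> p dvd q \<longrightarrow> f p = chi p)"

definition delta_f :: "(nat \<Rightarrow> int) \<Rightarrow> nat \<Rightarrow> nat" where
  "delta_f f k = (INF n. card {m \<in> {1..k}. f (n + m) = -1})"

text \<open>delta(k): supremum over all q > 1, real characters chi mod q and sign choices.
(The set is bounded by k and nonempty, so Sup on nat is its maximum.)\<close>
definition delta :: "nat \<Rightarrow> nat" where
  "delta k = Sup {delta_f f k | f. \<exists>q chi. q > 1 \<and> real_dirichlet_char q chi \<and> modified_char q chi f}"

end

theory Submission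
  imports Defs "HOL-Number_Theory.Cong"
begin

text \<open>
  Upper bound: for every modified character f and every large E there is a window length M such
  that every window of length M starting at c \<ge> 1 has f-sum at least minus the number of its
  elements divisible by p^E for some prime p dividing q. For large E these are a tiny fraction of
  M, so averaging the M block sums of length k produces a block with nonnegative sum, i.e. with
  at most k/2 values -1. If chi(a) = -1 for some a, then x \<mapsto> a x (mod q^E) permutes the
  elements of the window that are a divisor of q^(E-1) times a unit mod q, and it flips the sign
  of f on them. Otherwise chi is principal, so f(x) is the product of f(p)^v_p(x) over p | q; off
  the multiples of the p^E this is a product of p^E-periodic functions, whose sum over a period
  factors by the Chinese remainder theorem into local sums, each of which is nonnegative.

  Lower bound: the character mod 3 with the sign +1 at 3 has partial sums
  S(b) = [b \<equiv> 1 mod 3] + S(b div 3), so each of its block sums of length k \<le> 3^L is at most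
  L + 1 in absolute value.
\<close>

section \<open>Block sums and sums over windows of periodic functions\<close>

lemma double_card_minus_ones:
  fixes f :: "nat \<Rightarrow> int"
  assumes "\<forall>x>0. f x \<in> {-1,1}"
  shows "2 * int (card {m\<in>{1..k}. f (n+m) = -1}) = int k - (\<Sum>m\<in>{1..k}. f (n+m))"
proof -
  have "(\<Sum>m\<in>{1..k}. f (n+m)) = (\<Sum>m\<in>{1..k}. 1 - 2 * (if f (n+m) = -1 then 1 else 0))"
  proof (intro sum.cong refl)
    fix m assume "m \<in> {1..k}"
    hence "f (n+m) \<in> {-1,1}" using assms by simp
    thus "f (n+m) = 1 - 2 * (if f (n+m) = -1 then 1 else 0)" by auto
  qed
  also have "\<dots> = int k - 2 * (\<Sum>m\<in>{1..k}. (if f (n+m) = -1 then 1 else 0))"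
    by (simp add: sum_subtractf sum_distrib_left)
  also have "(\<Sum>m\<in>{1..k}. (if f (n+m) = -1 then 1 else 0)) = int (card {m\<in>{1..k}. f (n+m) = -1})"
    by (simp add: sum.If_cases) (rule arg_cong[where f=card], auto)
  finally show ?thesis by simp
qed

text \<open>The M block sums starting at n < M add up to k window sums of length M.\<close>
lemma exists_nonneg_block_sum:
  fixes f :: "nat \<Rightarrow> int"
  assumes "M > 0" "k * B < M" "\<forall>c\<ge>1. sum f {c..<c+M} \<ge> - int B"
  shows "\<exists>n. (\<Sum>m\<in>{1..k}. f (n+m)) \<ge> 0"
proof (rule ccontr)
  assume "\<not> ?thesis"
  hence neg: "(\<Sum>m\<in>{1..k}. f (n+m)) < 0" for n by (simp add: not_le)
  have "(\<Sum>n<M. \<Sum>m\<in>{1..k}. f (n+m)) \<le> (\<Sum>n<M. -1)"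
  proof (rule sum_mono)
    fix n show "(\<Sum>m\<in>{1..k}. f (n+m)) \<le> -1" using neg[of n] by linarith
  qed
  hence upper: "(\<Sum>n<M. \<Sum>m\<in>{1..k}. f (n+m)) \<le> - int M" by simp
  have "(\<Sum>n<M. \<Sum>m\<in>{1..k}. f (n+m)) = (\<Sum>m\<in>{1..k}. \<Sum>n<M. f (n+m))"
    by (rule sum.swap)
  also have "\<dots> = (\<Sum>m\<in>{1..k}. sum f {m..<m+M})"
  proof (rule sum.cong[OF refl])
    fix m assume "m \<in> {1..k}"
    show "(\<Sum>n<M. f (n+m)) = sum f {m..<m+M}"
      using sum.shift_bounds_nat_ivl[of f 0 m M] by (simp add: lessThan_atLeast0 add.commute)
  qed
  also have "\<dots> \<ge> (\<Sum>m\<in>{1..k}. - int B)"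
    using assms(3) by (intro sum_mono) auto
  finally have "- int (k * B) \<le> - int M" using upper by simp
  thus False using assms(2) by linarith
qed

lemma periodic_add_mult:
  fixes a t :: nat
  assumes "\<forall>x. g (x + a) = g x"
  shows "g (x + a*t) = g x"
proof (induction t)
  case (Suc t)
  have "g (x + a * Suc t) = g ((x + a*t) + a)" by (simp add: algebra_simps)
  also have "\<dots> = g (x + a*t)" using assms by blast
  finally show ?case using Suc by simp
qed simp

lemma periodic_mod: "\<forall>x. g (x + a) = g x \<Longrightarrow> g (x mod a) = g (x::nat)"
  using periodic_add_mult[of g a "x mod a" "x div a"] by simp

lemma sum_periodic_window:
  fixes g :: "nat \<Rightarrow> 'a::ab_group_add"
  assumes "\<forall>x. g (x + M) = g x"
  shows "sum g {c..<c+M} = sum g {..<M}"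
proof (induction c)
  case 0 thus ?case by (simp add: lessThan_atLeast0)
next
  case (Suc c)
  show ?case
  proof (cases "M = 0")
    case False
    have "sum g {c..<c+M} = g c + sum g {Suc c..<c+M}"
      using False by (subst sum.atLeast_Suc_lessThan) auto
    moreover have "sum g {Suc c..<Suc c+M} = sum g {Suc c..<c+M} + g (c+M)"
      using False by (simp add: sum.atLeastLessThan_Suc)
    moreover have "g (c+M) = g c" using assms by simp
    ultimately show ?thesis using Suc.IH by simp
  qed simp
qed

lemma eq_if_mod_eq_in_window:
  fixes x y :: nat
  assumes "x \<in> {c..<c+M}" "y \<in> {c..<c+M}" "x mod M = y mod M"
  shows "x = y"
proof -
  have "x = y" if "x \<in> {c..<c+M}" "y \<in> {c..<c+M}" "x mod M = y mod M" "x \<le> y" for x y :: nat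
  proof (rule ccontr)
    assume "x \<noteq> y"
    have "M dvd y - x" using that by (metis mod_eq_dvd_iff_nat)
    hence "M \<le> y - x" using \<open>x \<noteq> y\<close> \<open>x \<le> y\<close> by (intro dvd_imp_le) auto
    thus False using that(1,2) by auto
  qed
  thus ?thesis using assms by (metis nat_le_linear)
qed

lemma card_multiples_in_window:
  assumes "m > 0" "m dvd M"
  shows "card {x\<in>{c..<c+M}. m dvd x} = M div m"
proof -
  let ?g = "\<lambda>x::nat. (if m dvd x then 1 else 0) :: int"
  have per: "\<forall>x. ?g (x + M) = ?g x" using assms(2) by (auto simp: dvd_add_left_iff)
  have "int (card {x\<in>{c..<c+M}. m dvd x}) = sum ?g {c..<c+M}"
    by (simp add: sum.If_cases) (rule arg_cong[where f=card], auto)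
  also have "\<dots> = sum ?g {..<M}" by (rule sum_periodic_window[OF per])
  also have "\<dots> = int (card {x\<in>{..<M}. m dvd x})"
    by (simp add: sum.If_cases) (rule arg_cong[where f=card], auto)
  also have "{x\<in>{..<M}. m dvd x} = (\<lambda>j. m*j) ` {..<M div m}"
  proof -
    obtain t where t: "M = m * t" using assms(2) by blast
    show ?thesis unfolding t using assms(1) by (auto simp: image_iff)
  qed
  also have "card \<dots> = M div m" using assms(1) by (subst card_image) (auto simp: inj_on_def)
  finally show ?thesis by simp
qed

lemma card_prime_power_multiples_in_window_le:
  assumes fin: "finite P" and pr: "\<forall>p\<in>P. prime p" and dv: "\<forall>p\<in>P. p^E dvd M"
  shows "card {x\<in>{c..<c+M}. \<exists>p\<in>P. p^E dvd x} \<le> card P * (M div 2^E)"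
proof -
  have "{x\<in>{c..<c+M}. \<exists>p\<in>P. p^E dvd x} = (\<Union>p\<in>P. {x\<in>{c..<c+M}. p^E dvd x})" by auto
  hence "card {x\<in>{c..<c+M}. \<exists>p\<in>P. p^E dvd x} \<le> (\<Sum>p\<in>P. card {x\<in>{c..<c+M}. p^E dvd x})"
    using card_UN_le[OF fin] by simp
  also have "\<dots> \<le> (\<Sum>p\<in>P. M div 2^E)"
  proof (rule sum_mono)
    fix p assume pP: "p \<in> P"
    have p2: "2 \<le> p" using pr pP prime_ge_2_nat by blast
    have "card {x\<in>{c..<c+M}. p^E dvd x} = M div p^E"
      using card_multiples_in_window[of "p^E" M c] dv pP p2 by simp
    also have "\<dots> \<le> M div 2^E" using p2 by (intro div_le_mono2) (auto intro: power_mono)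
    finally show "card {x\<in>{c..<c+M}. p^E dvd x} \<le> M div 2^E" .
  qed
  finally show ?thesis by simp
qed

lemma sum_periodic_mult_coprime:
  fixes g h :: "nat \<Rightarrow> int"
  assumes cop: "coprime a b" and a0: "a > 0" and b0: "b > 0"
    and pg: "\<forall>x. g (x + a) = g x" and ph: "\<forall>x. h (x + b) = h x"
  shows "(\<Sum>x<a*b. g x * h x) = (\<Sum>x<a. g x) * (\<Sum>x<b. h x)"
proof -
  define \<phi> where "\<phi> x = (x mod a, x mod b)" for x :: nat
  have inj: "inj_on \<phi> {..<a*b}"
  proof (rule inj_onI)
    fix x y assume xy: "x \<in> {..<a*b}" "y \<in> {..<a*b}" "\<phi> x = \<phi> y"
    hence "[x = y] (mod a)" "[x = y] (mod b)" unfolding \<phi>_def cong_def by auto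
    hence "[x = y] (mod a*b)" using coprime_cong_mult_nat cop by blast
    thus "x = y" using xy(1,2) by (simp add: cong_def)
  qed
  have sub: "\<phi> ` {..<a*b} \<subseteq> {..<a} \<times> {..<b}" unfolding \<phi>_def using a0 b0 by auto
  have "card (\<phi> ` {..<a*b}) = card ({..<a} \<times> {..<b})"
    using inj by (simp add: card_image card_cartesian_product)
  hence "\<phi> ` {..<a*b} = {..<a} \<times> {..<b}" using sub by (intro card_subset_eq) auto
  hence bij: "bij_betw \<phi> {..<a*b} ({..<a} \<times> {..<b})" using inj unfolding bij_betw_def by blast
  have "(\<Sum>x<a*b. g x * h x) = (\<Sum>x<a*b. (\<lambda>(i,j). g i * h j) (\<phi> x))"
    unfolding \<phi>_def using periodic_mod[OF pg] periodic_mod[OF ph] by simp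
  also have "\<dots> = (\<Sum>(i,j)\<in>{..<a} \<times> {..<b}. g i * h j)"
    by (rule sum.reindex_bij_betw[OF bij])
  also have "\<dots> = (\<Sum>i<a. \<Sum>j<b. g i * h j)" by (rule sum.cartesian_product[symmetric])
  also have "\<dots> = (\<Sum>x<a. g x) * (\<Sum>x<b. h x)" by (rule sum_product[symmetric])
  finally show ?thesis .
qed

lemma prod_periodic:
  fixes u :: "'i \<Rightarrow> nat \<Rightarrow> int"
  assumes "\<forall>r\<in>S. \<forall>x. u r (x + m r) = u r x" "\<forall>r\<in>S. m r dvd N"
  shows "\<forall>x. (\<Prod>r\<in>S. u r (x + N)) = (\<Prod>r\<in>S. u r x)"
proof
  fix x
  show "(\<Prod>r\<in>S. u r (x + N)) = (\<Prod>r\<in>S. u r x)"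
  proof (rule prod.cong[OF refl])
    fix r assume r: "r \<in> S"
    then obtain t where "N = m r * t" using assms(2) by blast
    thus "u r (x + N) = u r x" using periodic_add_mult[of "u r" "m r" x t] assms(1) r by simp
  qed
qed

lemma sum_prod_prime_power_periodic:
  fixes u :: "nat \<Rightarrow> nat \<Rightarrow> int"
  assumes "finite S" "\<forall>p\<in>S. prime p" "\<forall>p\<in>S. \<forall>x. u p (x + p^E) = u p x"
  shows "(\<Sum>x<(\<Prod>p\<in>S. p^E). \<Prod>p\<in>S. u p x) = (\<Prod>p\<in>S. \<Sum>x<p^E. u p x)"
  using assms
proof (induction S rule: finite_induct)
  case (insert p S)
  have pp: "prime p" using insert.prems by simp
  have cop: "coprime (p^E) (\<Prod>r\<in>S. r^E)"
  proof (rule prod_coprime_right)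
    fix r assume "r \<in> S"
    hence "prime r" "r \<noteq> p" using insert.prems insert.hyps by auto
    hence "coprime p r" using pp primes_coprime by blast
    thus "coprime (p^E) (r^E)" by simp
  qed
  have pos: "p^E > 0" "(\<Prod>r\<in>S. r^E) > 0" using pp insert.prems
    by (auto simp: prime_gt_0_nat intro!: prod_pos)
  have perS: "\<forall>x. (\<Prod>r\<in>S. u r (x + (\<Prod>r\<in>S. r^E))) = (\<Prod>r\<in>S. u r x)"
    by (rule prod_periodic[where m="\<lambda>r. r^E"]) (use insert.prems insert.hyps in auto)
  have perp: "\<forall>x. u p (x + p^E) = u p x" using insert.prems by simp
  have "(\<Sum>x<(\<Prod>r\<in>insert p S. r^E). \<Prod>r\<in>insert p S. u r x)
      = (\<Sum>x<p^E * (\<Prod>r\<in>S. r^E). u p x * (\<Prod>r\<in>S. u r x))"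
    using insert.hyps by simp
  also have "\<dots> = (\<Sum>x<p^E. u p x) * (\<Sum>x<(\<Prod>r\<in>S. r^E). \<Prod>r\<in>S. u r x)"
    by (rule sum_periodic_mult_coprime[OF cop pos perp perS])
  also have "\<dots> = (\<Sum>x<p^E. u p x) * (\<Prod>r\<in>S. \<Sum>x<r^E. u r x)"
    using insert.IH insert.prems by simp
  also have "\<dots> = (\<Prod>r\<in>insert p S. \<Sum>x<r^E. u r x)" using insert.hyps by simp
  finally show ?case .
qed simp

text \<open>Dividing by p maps the x with odd valuation injectively to the x with even valuation.\<close>
lemma sum_sign_pow_multiplicity_nonneg:
  fixes \<eta> :: int and p :: nat
  assumes p: "prime p" and eta: "\<eta> \<in> {-1,1}"
  shows "0 \<le> (\<Sum>x<p^E. if x = 0 then 0 else \<eta> ^ multiplicity p x)"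
proof (cases "\<eta> = 1")
  case True thus ?thesis by (intro sum_nonneg) auto
next
  case False
  hence e: "\<eta> = -1" using eta by auto
  define Odd where "Odd = {x\<in>{..<p^E}. x \<noteq> 0 \<and> odd (multiplicity p x)}"
  define Even where "Even = {x\<in>{..<p^E}. x \<noteq> 0 \<and> even (multiplicity p x)}"
  have np: "\<not> is_unit p" "p \<noteq> 0" using p by (auto simp: prime_gt_0_nat)
  have "(\<Sum>x<p^E. if x = 0 then 0 else \<eta> ^ multiplicity p x) = (\<Sum>x\<in>{x\<in>{..<p^E}. x \<noteq> 0}. \<eta> ^ multiplicity p x)"
    by (subst sum.inter_filter) (auto intro!: sum.cong)
  also have "{x\<in>{..<p^E}. x \<noteq> 0} = Even \<union> Odd" unfolding Even_def Odd_def by auto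
  also have "(\<Sum>x\<in>Even \<union> Odd. \<eta> ^ multiplicity p x) = (\<Sum>x\<in>Even. 1) + (\<Sum>x\<in>Odd. -1)"
    unfolding e by (subst sum.union_disjoint) (auto simp: Even_def Odd_def intro!: sum.cong)
  finally have sum_eq: "(\<Sum>x<p^E. if x = 0 then 0 else \<eta> ^ multiplicity p x) = int (card Even) - int (card Odd)"
    by simp
  have "(\<lambda>x. x div p) ` Odd \<subseteq> Even"
  proof
    fix y assume "y \<in> (\<lambda>x. x div p) ` Odd"
    then obtain x where x: "x \<in> Odd" "y = x div p" by blast
    have "multiplicity p x > 0" using x(1) unfolding Odd_def by (auto intro: odd_pos)
    hence "p dvd x" using x(1) np unfolding Odd_def by (simp add: multiplicity_gt_zero_iff)
    then obtain z where z: "x = p * z" by blast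
    have "z \<noteq> 0" using z x(1) unfolding Odd_def by auto
    hence "multiplicity p x = Suc (multiplicity p z)" using z np multiplicity_times_same[of z p] by simp
    moreover have "y = z" using x(2) z np by simp
    moreover have "z < p^E"
    proof -
      have "z \<le> p * z" using np by simp
      moreover have "p * z < p^E" using z x(1) unfolding Odd_def by simp
      ultimately show ?thesis by linarith
    qed
    ultimately show "y \<in> Even" using x(1) \<open>z \<noteq> 0\<close> unfolding Odd_def Even_def by auto
  qed
  moreover have "inj_on (\<lambda>x. x div p) Odd"
  proof (rule inj_onI)
    fix x y assume xy: "x \<in> Odd" "y \<in> Odd" "x div p = y div p"
    have "multiplicity p x > 0" "multiplicity p y > 0" using xy unfolding Odd_def by (auto intro: odd_pos)
    hence "p dvd x" "p dvd y" using xy np unfolding Odd_def by (simp_all add: multiplicity_gt_zero_iff)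
    thus "x = y" using xy(3) by (metis dvd_div_mult_self)
  qed
  ultimately have "card Odd \<le> card Even" by (intro card_inj_on_le) (auto simp: Even_def)
  thus ?thesis using sum_eq by simp
qed

lemma multiplicity_mod_prime_power:
  assumes p: "prime (p::nat)" and x: "x > 0" and nd: "\<not> p^E dvd x"
  shows "multiplicity p (x mod p^E) = multiplicity p x"
proof -
  define v where "v = multiplicity p x"
  have np: "\<not> is_unit p" using p not_prime_unit by blast
  have pv: "p^v dvd x" unfolding v_def by (rule multiplicity_dvd)
  have npv: "\<not> p^Suc v dvd x" unfolding v_def
    using power_dvd_iff_le_multiplicity[of x p "Suc (multiplicity p x)"] x np by simp
  have vE: "v < E"
  proof (rule ccontr)
    assume "\<not> v < E"
    hence "p^E dvd p^v" by (simp add: le_imp_power_dvd)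
    thus False using pv nd dvd_trans by blast
  qed
  have "p^v dvd p^E" using vE by (simp add: le_imp_power_dvd)
  hence "p^v dvd x mod p^E" using pv by (simp add: dvd_mod)
  moreover have "\<not> p^Suc v dvd x mod p^E"
  proof
    assume "p^Suc v dvd x mod p^E"
    moreover have "p^Suc v dvd p^E * (x div p^E)"
      using vE by (intro dvd_mult2 le_imp_power_dvd) simp
    ultimately have "p^Suc v dvd x mod p^E + p^E * (x div p^E)" by (rule dvd_add)
    thus False using npv by simp
  qed
  ultimately show ?thesis unfolding v_def[symmetric] by (rule multiplicity_eqI)
qed

section \<open>The extremal character modulo 3\<close>

definition chi3 :: "nat \<Rightarrow> int" where
  "chi3 n = (if n mod 3 = 1 then 1 else if n mod 3 = 2 then -1 else 0)"

function f3 :: "nat \<Rightarrow> int" where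
  "f3 n = (if n = 0 then 1 else if 3 dvd n then f3 (n div 3) else chi3 n)"
  by auto
termination by (relation "Wellfounded.measure id") auto

declare f3.simps[simp del]

lemma chi3_mult: "chi3 (a*b) = chi3 a * chi3 b"
proof -
  have e: "(a*b) mod 3 = ((a mod 3) * (b mod 3)) mod 3" by (simp add: mod_mult_eq)
  have ha: "a mod 3 = 0 \<or> a mod 3 = 1 \<or> a mod 3 = 2" by presburger
  have hb: "b mod 3 = 0 \<or> b mod 3 = 1 \<or> b mod 3 = 2" by presburger
  from ha hb show ?thesis unfolding chi3_def by (elim disjE) (simp_all add: e)
qed

lemma coprime_3_iff: "coprime n (3::nat) \<longleftrightarrow> \<not> 3 dvd n"
proof
  assume "coprime n 3" thus "\<not> 3 dvd n" using not_coprimeI[of 3 n 3] by auto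
next
  assume "\<not> 3 dvd n"
  hence "coprime 3 n" by (intro prime_imp_coprime) auto
  thus "coprime n 3" by (simp add: coprime_commute)
qed

lemma real_dirichlet_char_chi3: "real_dirichlet_char 3 chi3"
  unfolding real_dirichlet_char_def
proof (intro conjI allI)
  fix a b show "chi3 (a*b) = chi3 a * chi3 b" by (rule chi3_mult)
next
  fix n show "chi3 n = 0 \<longleftrightarrow> \<not> coprime n 3"
    unfolding coprime_3_iff chi3_def by presburger
qed (simp_all add: chi3_def)

lemma f3_not_dvd: "\<not> 3 dvd n \<Longrightarrow> f3 n = chi3 n"
  by (subst f3.simps) auto

lemma f3_times_3: "n > 0 \<Longrightarrow> f3 (3*n) = f3 n"
  by (subst f3.simps) auto

lemma f3_pm1: "n > 0 \<Longrightarrow> f3 n \<in> {-1,1}"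
proof (induction n rule: less_induct)
  case (less n)
  show ?case
  proof (cases "3 dvd n")
    case True
    then obtain m where m: "n = 3*m" by blast
    with less.prems have "m > 0" "m < n" by auto
    with less.IH have "f3 m \<in> {-1,1}" by blast
    thus ?thesis using m \<open>m>0\<close> f3_times_3 by simp
  next
    case False
    hence "n mod 3 = 1 \<or> n mod 3 = 2" by presburger
    thus ?thesis by (auto simp: f3_not_dvd[OF False] chi3_def)
  qed
qed

lemma f3_mult: "a > 0 \<Longrightarrow> b > 0 \<Longrightarrow> f3 (a*b) = f3 a * f3 b"
proof (induction "a+b" arbitrary: a b rule: less_induct)
  case less
  show ?case
  proof (cases "3 dvd a")
    case True
    then obtain a' where a': "a = 3*a'" by blast
    with less.prems have "a' > 0" "a'+b < a+b" by auto
    with less.hyps[of a' b] less.prems have "f3 (a'*b) = f3 a' * f3 b" by blast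
    thus ?thesis using a' \<open>a'>0\<close> less.prems f3_times_3[of "a'*b"] f3_times_3[of a']
      by (simp add: mult.assoc)
  next
    case na: False
    show ?thesis
    proof (cases "3 dvd b")
      case True
      then obtain b' where b': "b = 3*b'" by blast
      with less.prems have "b' > 0" "a+b' < a+b" by auto
      with less.hyps[of a b'] less.prems have IH: "f3 (a*b') = f3 a * f3 b'" by blast
      have "f3 (a*b) = f3 (3*(a*b'))" using b' by (simp add: ac_simps)
      also have "\<dots> = f3 (a*b')" using f3_times_3[of "a*b'"] \<open>b'>0\<close> less.prems by simp
      finally show ?thesis using IH b' \<open>b'>0\<close> f3_times_3[of b'] by simp
    next
      case False
      hence "\<not> 3 dvd a*b" using na prime_dvd_mult_iff[of "3::nat" a b] by simp
      thus ?thesis using na False by (simp add: f3_not_dvd chi3_mult)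
    qed
  qed
qed

lemma modified_char_f3: "modified_char 3 chi3 f3"
  unfolding modified_char_def
proof (intro conjI allI impI)
  fix n :: nat assume "n > 0" thus "f3 n \<in> {-1,1}" by (rule f3_pm1)
next
  fix a b :: nat assume "a > 0" "b > 0" thus "f3 (a*b) = f3 a * f3 b" by (rule f3_mult)
next
  fix p :: nat assume H: "prime p \<and> \<not> p dvd 3"
  have "\<not> 3 dvd p" using H prime_nat_iff[of p] by auto
  thus "f3 p = chi3 p" by (rule f3_not_dvd)
qed

definition S3 :: "nat \<Rightarrow> int" where "S3 b = (\<Sum>x\<in>{1..b}. f3 x)"

lemma S3_Suc: "S3 (Suc b) = S3 b + f3 (Suc b)"
  unfolding S3_def by simp

lemma S3_div_3: "S3 b = (if b mod 3 = 1 then 1 else 0) + S3 (b div 3)"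
proof (induction b)
  case 0 thus ?case by (simp add: S3_def)
next
  case (Suc b)
  show ?case
  proof (cases "3 dvd Suc b")
    case True
    then obtain m where m: "Suc b = 3 * m" by blast
    hence "Suc b div 3 = Suc (b div 3)" "b mod 3 = 2" "Suc b mod 3 = 0" "m = Suc (b div 3)"
      by presburger+
    moreover have "f3 (Suc b) = f3 (Suc (b div 3))"
      using m f3_times_3[of m] \<open>m = Suc (b div 3)\<close> by (metis zero_less_Suc)
    ultimately show ?thesis using Suc by (simp add: S3_Suc)
  next
    case False
    hence "Suc b div 3 = b div 3"
      "b mod 3 = 0 \<and> Suc b mod 3 = 1 \<or> b mod 3 = 1 \<and> Suc b mod 3 = 2" by presburger+
    thus ?thesis using Suc False by (auto simp: S3_Suc f3_not_dvd chi3_def)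
  qed
qed

lemma S3_diff_le:
  assumes "a \<le> b" "b - a \<le> 3^L"
  shows "\<bar>S3 b - S3 a\<bar> \<le> int L + 1"
  using assms
proof (induction L arbitrary: a b)
  case 0
  hence "b = a \<or> b = Suc a" by auto
  thus ?case using f3_pm1[of "Suc a"] by (auto simp: S3_Suc)
next
  case (Suc L)
  have "b div 3 - a div 3 \<le> 3^L" using Suc.prems by simp
  moreover have "a div 3 \<le> b div 3" using Suc.prems by (simp add: div_le_mono)
  ultimately have IH: "\<bar>S3 (b div 3) - S3 (a div 3)\<bar> \<le> int L + 1" using Suc.IH by blast
  show ?case using S3_div_3[of b] S3_div_3[of a] IH by (simp split: if_splits; linarith)
qed

lemma sum_f3_block: "(\<Sum>m\<in>{1..k}. f3 (n+m)) = S3 (n+k) - S3 n"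
  by (induction k) (simp_all add: S3_Suc)

section \<open>Every modified character has a block with nonnegative sum\<close>

locale modified_character =
  fixes q :: nat and chi f :: "nat \<Rightarrow> int"
  assumes q_gt_1: "q > 1"
    and real_char: "real_dirichlet_char q chi"
    and modified: "modified_char q chi f"
begin

lemma f_pm1: "x > 0 \<Longrightarrow> f x \<in> {-1,1}"
  using modified unfolding modified_char_def by blast

lemma f_mult: "a > 0 \<Longrightarrow> b > 0 \<Longrightarrow> f (a*b) = f a * f b"
  using modified unfolding modified_char_def by blast

lemma f_prime: "prime p \<Longrightarrow> \<not> p dvd q \<Longrightarrow> f p = chi p"
  using modified unfolding modified_char_def by blast

lemma chi_mult: "chi (a*b) = chi a * chi b"
  using real_char unfolding real_dirichlet_char_def by blast

lemma chi_one: "chi 1 = 1"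
  using real_char unfolding real_dirichlet_char_def by blast

lemma chi_eq_0_iff: "chi n = 0 \<longleftrightarrow> \<not> coprime n q"
  using real_char unfolding real_dirichlet_char_def by blast

lemma chi_values: "chi n \<in> {-1,0,1}"
  using real_char unfolding real_dirichlet_char_def by blast

lemma chi_mod: "chi (n mod q) = chi n"
  using real_char unfolding real_dirichlet_char_def by (blast intro: periodic_mod)

lemma in_prime_factors_q_iff: "p \<in> prime_factors q \<longleftrightarrow> prime p \<and> p dvd q"
  using q_gt_1 by (auto simp: in_prime_factors_iff)

lemma f_one: "f 1 = 1"
  using f_mult[of 1 1] f_pm1[of 1] by auto

lemma f_coprime: "m > 0 \<Longrightarrow> coprime m q \<Longrightarrow> f m = chi m"
proof (induction m rule: less_induct)
  case (less m)
  show ?case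
  proof (cases "m = 1")
    case True thus ?thesis using f_one chi_one by simp
  next
    case False
    then obtain p where p: "prime p" "p dvd m" using prime_factor_nat by blast
    then obtain m' where m': "m = p * m'" by blast
    have pos: "m' > 0" "p > 0" using m' less.prems p prime_gt_0_nat by auto
    have "m' < m" using m' pos prime_gt_1_nat[OF p(1)] by simp
    have cm': "coprime m' q" using less.prems m' by simp
    have "\<not> p dvd q"
      using less.prems p not_coprimeI[of p m q] prime_gt_1_nat[OF p(1)] by auto
    hence "f m = chi p * chi m'"
      using m' pos f_mult f_prime[OF p(1)] less.IH[OF \<open>m' < m\<close> pos(1) cm'] by simp
    thus ?thesis using m' chi_mult by simp
  qed
qed

text \<open>
  This set is closed under multiplication by units mod q^E, and every positive x outside it is
  divisible by p^E for a prime p | q.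
\<close>
definition unit_cofactor :: "nat \<Rightarrow> nat \<Rightarrow> bool" where
  "unit_cofactor E x \<longleftrightarrow> (\<exists>d. d dvd q^(E-1) \<and> d dvd x \<and> coprime (x div d) q)"

lemma cong_transfer_unit_cofactor:
  assumes "d dvd x" "x > 0" "y > 0" "coprime (x div d) q" "x mod (q*d) = y mod (q*d)"
  shows "d dvd y \<and> coprime (y div d) q \<and> f y = f x"
proof -
  have d0: "d > 0" using assms(1,2) by (metis dvd_0_left_iff gr0I)
  have "x mod d = y mod d" using assms(5) by (metis mod_mod_cancel dvd_triv_right)
  hence dy: "d dvd y" using assms(1) by (simp add: dvd_eq_mod_eq_0)
  obtain x' where x': "x = d * x'" using assms(1) by blast
  obtain y' where y': "y = d * y'" using dy by blast
  have "d * (x' mod q) = x mod (q*d)" using x' mult_mod_right[of d x' q] by (simp add: mult.commute)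
  also have "\<dots> = y mod (q*d)" by (rule assms(5))
  also have "\<dots> = d * (y' mod q)" using y' mult_mod_right[of d y' q] by (simp add: mult.commute)
  finally have xym: "x' mod q = y' mod q" using d0 by simp
  have q0: "q \<noteq> 0" using q_gt_1 by simp
  have cx: "coprime x' q" using assms(4) x' d0 by simp
  hence cy: "coprime y' q" using xym coprime_mod_left_iff[OF q0] by metis
  have pos: "x' > 0" "y' > 0" using x' y' assms(2,3) by auto
  have "f x = f d * chi x'" using x' d0 pos f_mult f_coprime[OF pos(1) cx] by simp
  also have "chi x' = chi y'" using chi_mod[of x'] chi_mod[of y'] xym by simp
  also have "f d * chi y' = f y" using y' d0 pos f_mult f_coprime[OF pos(2) cy] by simp
  finally show ?thesis using dy cy y' d0 by simp
qed

lemma prime_power_dvd_if_not_unit_cofactor: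
  assumes "E \<ge> 1" "x > 0" "\<not> unit_cofactor E x"
  shows "\<exists>p. prime p \<and> p dvd q \<and> p^E dvd x"
proof -
  define g where "g = gcd x (q^(E-1))"
  have g1: "g dvd q^(E-1)" "g dvd x" unfolding g_def by auto
  have g0: "g > 0" unfolding g_def using assms(2) by simp
  have "\<not> coprime (x div g) q" using assms(3) g1 unfolding unit_cofactor_def by blast
  then obtain p where p: "prime p" "p dvd x div g" "p dvd q"
    using prime_factor_nat[of "gcd (x div g) q"] by (auto simp: coprime_iff_gcd_eq_1)
  obtain h where h: "q^(E-1) = g * h" using g1 by blast
  have xg: "g * (x div g) = x" using g1 by simp
  have gpx: "g * p dvd x" using p(2) mult_dvd_mono[OF dvd_refl] xg by metis
  have "\<not> p dvd h"
  proof
    assume "p dvd h"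
    hence "g * p dvd q^(E-1)" using h by (simp add: mult_dvd_mono)
    hence "g * p dvd g * 1" using gpx unfolding g_def by (simp add: gcd_greatest)
    hence "p dvd 1" using g0 by (subst (asm) dvd_times_left_cancel_iff) auto
    thus False using p(1) by simp
  qed
  hence "coprime (p^(E-1)) h" using p(1) by (simp add: prime_imp_coprime)
  moreover have "p^(E-1) dvd g * h" using p(3) h by (metis dvd_power_same)
  ultimately have "p^(E-1) dvd g" using coprime_dvd_mult_left_iff by blast
  hence "p^(E-1) * p dvd g * (x div g)" using p(2) by (rule mult_dvd_mono)
  moreover have "p^(E-1) * p = p^E" using assms(1) by (cases E) (auto simp: mult.commute)
  ultimately show ?thesis using xg p(1,3) by metis
qed

lemma unit_cofactor_mult_nonprincipal:
  assumes a: "chi a = -1" and E: "E \<ge> 1" and x: "x > 0" "unit_cofactor E x"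
    and y: "y > 0" "y mod q^E = a*x mod q^E"
  shows "unit_cofactor E y \<and> f y = - f x"
proof -
  have ca: "coprime a q" using a chi_eq_0_iff[of a] by auto
  have a0: "a > 0" using ca q_gt_1 by (cases a) auto
  have fa: "f a = -1" using f_coprime[OF a0 ca] a by simp
  obtain d where d: "d dvd q^(E-1)" "d dvd x" "coprime (x div d) q"
    using x(2) unfolding unit_cofactor_def by blast
  have "q * q^(E-1) = q^E" using E by (cases E) auto
  hence qd: "q * d dvd q^E" using d(1) by (metis mult_dvd_mono dvd_refl)
  have "(a*x) div d = a * (x div d)" using d(2) by (simp add: div_mult_swap)
  hence "coprime ((a*x) div d) q" using ca d(3) by simp
  moreover have "(a*x) mod (q*d) = y mod (q*d)"
    using y(2) qd by (metis mod_mod_cancel)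
  ultimately have y_d: "d dvd y" "coprime (y div d) q" "f y = f (a*x)"
    using cong_transfer_unit_cofactor[of d "a*x" y] d(2) x(1) a0 y(1) by simp_all
  have "unit_cofactor E y" unfolding unit_cofactor_def using d(1) y_d(1,2) by blast
  moreover have "f y = - f x" using y_d(3) f_mult[OF a0 x(1)] fa by simp
  ultimately show ?thesis by blast
qed

text \<open>x \<mapsto> a x, reduced into the window, permutes its unit-cofactor elements and negates f.\<close>
lemma sum_unit_cofactor_window_eq_0:
  assumes a: "chi a = -1" and E: "E \<ge> 1" and c: "c \<ge> 1"
  shows "(\<Sum>x\<in>{x\<in>{c..<c+q^E}. unit_cofactor E x}. f x) = 0"
proof -
  define M where "M = q^E"
  define G where "G = {x\<in>{c..<c+M}. unit_cofactor E x}"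
  define \<sigma> where "\<sigma> x = c + (a*x + (M - 1)*c) mod M" for x
  have M0: "M > 0" unfolding M_def using q_gt_1 by simp
  have caM: "coprime a M" unfolding M_def using a chi_eq_0_iff[of a] by auto
  have \<sigma>_mod: "\<sigma> x mod M = a*x mod M" for x
  proof -
    have "c + (a*x + (M - 1)*c) = a*x + M*c" using M0 by (cases M) auto
    thus ?thesis unfolding \<sigma>_def by (metis mod_add_right_eq mod_mult_self1 mult.commute)
  qed
  have \<sigma>_window: "\<sigma> x \<in> {c..<c+M}" for x unfolding \<sigma>_def using M0 by simp
  have inj: "inj_on \<sigma> G"
  proof (rule inj_onI)
    fix x y assume "x \<in> G" "y \<in> G" "\<sigma> x = \<sigma> y"
    hence "[a*x = a*y] (mod M)" using \<sigma>_mod by (metis cong_def)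
    hence "x mod M = y mod M" using cong_mult_lcancel_nat[OF caM] by (simp add: cong_def)
    thus "x = y" using \<open>x \<in> G\<close> \<open>y \<in> G\<close> eq_if_mod_eq_in_window unfolding G_def by blast
  qed
  have \<sigma>_G: "\<sigma> x \<in> G \<and> f (\<sigma> x) = - f x" if x_G: "x \<in> G" for x
  proof -
    have x: "x \<in> {c..<c+M}" "unit_cofactor E x" using x_G unfolding G_def by auto
    have "unit_cofactor E (\<sigma> x) \<and> f (\<sigma> x) = - f x"
      using unit_cofactor_mult_nonprincipal[OF a E _ x(2) _ \<sigma>_mod[of x, unfolded M_def]]
        x(1) \<sigma>_window[of x] c by simp
    thus ?thesis using \<sigma>_window[of x] unfolding G_def by simp
  qed
  have "finite G" unfolding G_def by simp
  moreover have "\<sigma> ` G \<subseteq> G" using \<sigma>_G by blast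
  ultimately have "\<sigma> ` G = G" using inj by (rule endo_inj_surj)
  hence "sum f G = sum f (\<sigma> ` G)" by simp
  also have "\<dots> = sum (\<lambda>x. f (\<sigma> x)) G" using inj by (simp add: sum.reindex)
  also have "\<dots> = sum (\<lambda>x. - f x) G" using \<sigma>_G by (intro sum.cong) auto
  also have "\<dots> = - sum f G" by (simp add: sum_negf)
  finally have "sum f G = 0" by linarith
  thus ?thesis unfolding G_def M_def .
qed

lemma window_sum_ge_nonprincipal:
  assumes a: "chi a = -1" and E: "E \<ge> 1" and c: "c \<ge> 1"
  shows "sum f {c..<c+q^E} \<ge> - int (card {x\<in>{c..<c+q^E}. \<exists>p\<in>prime_factors q. p^E dvd x})"
proof -
  define W where "W = {c..<c+q^E}"
  define G where "G = {x\<in>W. unit_cofactor E x}"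
  define Bad where "Bad = {x\<in>W. \<exists>p\<in>prime_factors q. p^E dvd x}"
  have fin: "finite W" "finite Bad" unfolding W_def Bad_def by auto
  have split: "sum f W = sum f G + sum f (W - G)"
    using sum.subset_diff[of G W f] fin unfolding G_def by (simp add: add.commute)
  have G0: "sum f G = 0" unfolding G_def W_def by (rule sum_unit_cofactor_window_eq_0[OF a E c])
  have "sum f (W - G) \<ge> sum (\<lambda>x. -1) (W - G)"
  proof (rule sum_mono)
    fix x assume "x \<in> W - G"
    hence "x > 0" using c unfolding W_def by auto
    thus "-1 \<le> f x" using f_pm1[of x] by auto
  qed
  hence rest: "sum f (W - G) \<ge> - int (card (W - G))" by simp
  have "W - G \<subseteq> Bad"
  proof
    fix x assume x: "x \<in> W - G"
    hence "x > 0" "\<not> unit_cofactor E x" "x \<in> W" using c unfolding W_def G_def by auto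
    thus "x \<in> Bad" unfolding Bad_def
      using prime_power_dvd_if_not_unit_cofactor[OF E] in_prime_factors_q_iff by blast
  qed
  hence "card (W - G) \<le> card Bad" using fin by (intro card_mono) auto
  hence "sum f W \<ge> - int (card Bad)" using split G0 rest by linarith
  thus ?thesis unfolding W_def Bad_def .
qed

lemma f_eq_prod_prime_factors_principal:
  assumes principal: "\<forall>a. chi a \<noteq> -1"
  shows "m > 0 \<Longrightarrow> f m = (\<Prod>p\<in>prime_factors q. f p ^ multiplicity p m)"
proof (induction m rule: less_induct)
  case (less m)
  show ?case
  proof (cases "m = 1")
    case True thus ?thesis using f_one by simp
  next
    case False
    then obtain r where r: "prime r" "r dvd m" using prime_factor_nat by blast
    then obtain m' where m': "m = r * m'" by blast
    have pos: "m' > 0" "r > 0" using m' less.prems r prime_gt_0_nat by auto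
    have "m' < m" using m' pos prime_gt_1_nat[OF r(1)] by simp
    have "(\<Prod>p\<in>prime_factors q. f p ^ multiplicity p m)
        = (\<Prod>p\<in>prime_factors q. (if p = r then f p else 1) * f p ^ multiplicity p m')"
    proof (rule prod.cong[OF refl])
      fix p assume "p \<in> prime_factors q"
      hence pp: "prime p" by (simp add: in_prime_factors_q_iff)
      have "multiplicity p m = multiplicity p r + multiplicity p m'"
        using m' pos pp by (simp add: prime_elem_multiplicity_mult_distrib)
      moreover have "multiplicity p r = (if p = r then 1 else 0)"
        using pp r(1) by (auto simp: prime_multiplicity_other)
      ultimately show "f p ^ multiplicity p m = (if p = r then f p else 1) * f p ^ multiplicity p m'"
        by (simp add: power_add)
    qed
    also have "\<dots> = (\<Prod>p\<in>prime_factors q. (if p = r then f p else 1)) * f m'"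
      using less.IH[OF \<open>m' < m\<close> pos(1)] by (simp add: prod.distrib)
    also have "(\<Prod>p\<in>prime_factors q. (if p = r then f p else 1)) = f r"
    proof (cases "r \<in> prime_factors q")
      case False
      hence "\<not> r dvd q" using r(1) by (simp add: in_prime_factors_q_iff)
      hence "coprime r q" using r(1) prime_imp_coprime by blast
      hence "chi r = 1" using chi_eq_0_iff[of r] chi_values[of r] principal by auto
      thus ?thesis using False f_prime r(1) \<open>\<not> r dvd q\<close> by simp
    qed simp
    also have "f r * f m' = f m" using m' pos f_mult by simp
    finally show ?thesis by simp
  qed
qed

text \<open>The p-part of f for the principal character, made p^E-periodic (and 0 on multiples of p^E).\<close>
definition local_factor :: "nat \<Rightarrow> nat \<Rightarrow> nat \<Rightarrow> int" where
  "local_factor E p x = (if x mod p^E = 0 then 0 else f p ^ multiplicity p (x mod p^E))"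

lemma sum_local_factor_nonneg:
  assumes "prime p"
  shows "0 \<le> (\<Sum>x<p^E. local_factor E p x)"
proof -
  have "f p \<in> {-1,1}" using f_pm1 assms prime_gt_0_nat by blast
  hence "0 \<le> (\<Sum>x<p^E. if x = 0 then 0 else f p ^ multiplicity p x)"
    using sum_sign_pow_multiplicity_nonneg[OF assms] by blast
  also have "\<dots> = (\<Sum>x<p^E. local_factor E p x)"
    unfolding local_factor_def by (intro sum.cong) auto
  finally show ?thesis .
qed

lemma window_sum_ge_principal:
  assumes principal: "\<forall>a. chi a \<noteq> -1" and c: "c \<ge> 1"
  shows "sum f {c..<c+(\<Prod>p\<in>prime_factors q. p^E)}
     \<ge> - int (card {x\<in>{c..<c+(\<Prod>p\<in>prime_factors q. p^E)}. \<exists>p\<in>prime_factors q. p^E dvd x})"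
proof -
  define P where "P = prime_factors q"
  define W where "W = {c..<c+(\<Prod>p\<in>P. p^E)}"
  define F where "F x = (\<Prod>p\<in>P. local_factor E p x)" for x
  define Bad where "Bad = {x\<in>W. \<exists>p\<in>P. p^E dvd x}"
  have finP: "finite P" and prP: "\<forall>p\<in>P. prime p" unfolding P_def by auto
  have F_eq: "F x = f x" if "x > 0" "x \<notin> Bad" "x \<in> W" for x
  proof -
    have "F x = (\<Prod>p\<in>P. f p ^ multiplicity p x)" unfolding F_def local_factor_def
      using that prP multiplicity_mod_prime_power unfolding Bad_def
      by (intro prod.cong refl) (auto simp: dvd_eq_mod_eq_0)
    thus ?thesis using f_eq_prod_prime_factors_principal[OF principal \<open>x > 0\<close>] unfolding P_def by simp
  qed
  have F_Bad: "F x = 0" if x_Bad: "x \<in> Bad" for x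
  proof -
    obtain p where "p \<in> P" "p^E dvd x" using x_Bad unfolding Bad_def by blast
    hence "local_factor E p x = 0" unfolding local_factor_def by simp
    thus ?thesis unfolding F_def using finP \<open>p \<in> P\<close> by (intro prod_zero) auto
  qed
  have "F x - (if x \<in> Bad then 1 else 0) \<le> f x" if "x \<in> W" for x
    using that c f_pm1[of x] F_eq[of x] F_Bad[of x] unfolding W_def by (cases "x \<in> Bad") auto
  hence "(\<Sum>x\<in>W. F x - (if x \<in> Bad then 1 else 0)) \<le> sum f W" by (rule sum_mono)
  moreover have "(\<Sum>x\<in>W. if x \<in> Bad then 1 else 0) = int (card Bad)"
    unfolding Bad_def W_def by (simp add: sum.If_cases) (rule arg_cong[where f=card], auto)
  moreover have "sum F W = (\<Prod>p\<in>P. \<Sum>x<p^E. local_factor E p x)"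
  proof -
    have "\<forall>x. F (x + (\<Prod>p\<in>P. p^E)) = F x" unfolding F_def
      by (rule prod_periodic[where m="\<lambda>p. p^E"]) (auto simp: local_factor_def finP)
    hence "sum F W = sum F {..<(\<Prod>p\<in>P. p^E)}" unfolding W_def by (rule sum_periodic_window)
    thus ?thesis unfolding F_def
      using sum_prod_prime_power_periodic[OF finP prP] by (simp add: local_factor_def)
  qed
  moreover have "(\<Prod>p\<in>P. \<Sum>x<p^E. local_factor E p x) \<ge> 0"
    using prP sum_local_factor_nonneg by (intro prod_nonneg) auto
  ultimately have "sum f W \<ge> - int (card Bad)" by (simp add: sum_subtractf)
  thus ?thesis unfolding W_def Bad_def P_def .
qed

text \<open>E is chosen so large that the multiples of p^E (p | q) fill less than a 1/k fraction of M.\<close>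
lemma exists_nonneg_block: "\<exists>n. 0 \<le> (\<Sum>m\<in>{1..k}. f (n+m))"
proof -
  define P where "P = prime_factors q"
  define E where "E = k * card P + 1"
  have finP: "finite P" and prP: "\<forall>p\<in>P. prime p" unfolding P_def by auto
  obtain M where M: "M > 0" "\<forall>p\<in>P. p^E dvd M"
    "\<forall>c\<ge>1. sum f {c..<c+M} \<ge> - int (card {x\<in>{c..<c+M}. \<exists>p\<in>P. p^E dvd x})"
  proof (cases "\<exists>a. chi a = -1")
    case True
    then obtain a where "chi a = -1" by blast
    moreover have "\<forall>p\<in>P. p^E dvd q^E" unfolding P_def by (auto simp: dvd_power_same)
    ultimately show ?thesis
      using that[of "q^E"] q_gt_1 window_sum_ge_nonprincipal[of a E] unfolding P_def E_def by simp
  next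
    case False
    moreover have "\<forall>p\<in>P. p^E dvd (\<Prod>p\<in>P. p^E)" using finP by auto
    moreover have "(\<Prod>p\<in>P. p^E) > 0" using prP by (auto intro!: prod_pos simp: prime_gt_0_nat)
    ultimately show ?thesis
      using that[of "\<Prod>p\<in>P. p^E"] window_sum_ge_principal unfolding P_def by blast
  qed
  define B where "B = card P * (M div 2^E)"
  have windows: "\<forall>c\<ge>1. sum f {c..<c+M} \<ge> - int B"
    using M(3) card_prime_power_multiples_in_window_le[OF finP prP M(2)] unfolding B_def
    by (meson neg_le_iff_le of_nat_le_iff order_trans)
  have kB: "k * B < M"
  proof (cases "M div 2^E = 0")
    case False
    have "k * card P < 2^E" unfolding E_def using less_exp[of "k * card P + 1"] by linarith
    hence "(k * card P) * (M div 2^E) < 2^E * (M div 2^E)" using False by simp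
    also have "\<dots> \<le> M" by simp
    finally show ?thesis unfolding B_def by (simp add: mult.assoc)
  qed (use M(1) B_def in simp)
  show ?thesis by (rule exists_nonneg_block_sum[OF M(1) kB windows])
qed

end

section \<open>Bounds for delta\<close>

lemma delta_f_le_half:
  assumes "\<forall>x>0. f x \<in> {-1,1}" "0 \<le> (\<Sum>m\<in>{1..k}. f (n+m))"
  shows "2 * delta_f f k \<le> k"
proof -
  have "2 * card {m\<in>{1..k}. f (n+m) = -1} \<le> k"
    using double_card_minus_ones[OF assms(1), of k n] assms(2) by linarith
  moreover have "delta_f f k \<le> card {m\<in>{1..k}. f (n+m) = -1}"
    unfolding delta_f_def by (rule cINF_lower) auto
  ultimately show ?thesis by linarith
qed

lemma delta_f_f3_ge:
  assumes "k \<le> 3^L"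
  shows "int k \<le> 2 * int (delta_f f3 k) + int L + 1"
proof -
  have "delta_f f3 k \<in> range (\<lambda>n. card {m\<in>{1..k}. f3 (n+m) = -1})"
    unfolding delta_f_def by (rule Inf_nat_def1) simp
  then obtain n where n: "delta_f f3 k = card {m\<in>{1..k}. f3 (n+m) = -1}" by blast
  have "\<bar>S3 (n+k) - S3 n\<bar> \<le> int L + 1" using S3_diff_le[of n "n+k" L] assms by simp
  moreover have "2 * int (delta_f f3 k) = int k - (S3 (n+k) - S3 n)"
    using n double_card_minus_ones[of f3 k n] f3_pm1 sum_f3_block by simp
  ultimately show ?thesis by linarith
qed

lemma delta_bounds: "delta_f f3 k \<le> delta k \<and> 2 * delta k \<le> k"
proof -
  define S where "S = {delta_f f k | f. \<exists>q chi. q > 1 \<and> real_dirichlet_char q chi \<and> modified_char q chi f}"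
  have "\<exists>q chi. q > 1 \<and> real_dirichlet_char q chi \<and> modified_char q chi f3"
    using real_dirichlet_char_chi3 modified_char_f3 by (intro exI[of _ 3] exI[of _ chi3]) simp
  hence f3_in: "delta_f f3 k \<in> S" unfolding S_def by blast
  have le_half: "x \<le> k div 2" if "x \<in> S" for x
  proof -
    from that obtain f q chi where x: "x = delta_f f k" and mc: "modified_character q chi f"
      unfolding S_def modified_character_def by blast
    interpret modified_character q chi f by (fact mc)
    have "\<forall>x>0. f x \<in> {-1,1}" using f_pm1 by blast
    moreover obtain n where "0 \<le> (\<Sum>m\<in>{1..k}. f (n+m))" using exists_nonneg_block by blast
    ultimately have "2 * delta_f f k \<le> k" by (rule delta_f_le_half)
    thus ?thesis using x by linarith
  qed
  have "Sup S \<le> k div 2" using f3_in le_half by (intro cSup_least) auto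
  moreover have "delta_f f3 k \<le> Sup S" using f3_in le_half by (intro cSup_upper bdd_aboveI) auto
  ultimately show ?thesis unfolding delta_def S_def[symmetric] by linarith
qed

lemma exists_pow3_ge_log_bound:
  assumes "k \<ge> 1"
  shows "\<exists>L. k \<le> 3^L \<and> real L + 1 \<le> 4 * ln (real k + 1)"
proof -
  define L where "L = (LEAST L. k \<le> 3^L)"
  have "k \<le> 3^k" using less_exp[of k] power_mono[of "2::nat" 3 k] by linarith
  hence kL: "k \<le> 3^L" unfolding L_def by (rule LeastI)
  have "3^L < 3*k"
  proof (cases L)
    case (Suc L')
    hence "\<not> k \<le> 3^L'" unfolding L_def by (metis lessI not_less_Least)
    thus ?thesis using Suc by simp
  qed (use assms in simp)
  have "ln (272/100::real) < ln 3" by (subst ln_less_cancel_iff) auto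
  hence ln3: "ln (3::real) > 1" using ln_272_gt_1 by linarith
  have "ln (2::real) \<le> ln (real k + 1)" using assms by (subst ln_le_cancel_iff) auto
  hence ln_k: "ln (real k + 1) \<ge> 2/3" using ln2_ge_two_thirds by linarith
  have "real L * ln 3 = ln ((3::real)^L)" by (simp add: ln_realpow)
  also have "\<dots> < ln (3 * real k)"
  proof (subst ln_less_cancel_iff)
    have "real (3^L) < real (3*k)" using \<open>3^L < 3*k\<close> by (simp only: of_nat_less_iff)
    thus "(3::real)^L < 3 * real k" by simp
  qed (use assms in simp_all)
  also have "\<dots> \<le> ln 3 + ln (real k + 1)" using assms by (simp add: ln_mult)
  finally have "(real L - 1) * ln 3 < ln (real k + 1)" by (simp add: left_diff_distrib)
  moreover have "real L - 1 \<le> (real L - 1) * ln 3 \<or> L = 0"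
    using ln3 by (cases L) (simp_all add: mult_le_cancel_left1)
  ultimately have "real L + 1 \<le> 4 * ln (real k + 1)" using ln_k by auto
  thus ?thesis using kL by blast
qed

theorem theorem1p2:
  shows "\<exists>C::real. \<forall>k::nat. k \<ge> 1 \<longrightarrow>
           \<bar>real (delta k) - real k / 2\<bar> \<le> C * ln (real k + 1)"
proof (intro exI[of _ 2] allI impI)
  fix k :: nat assume "k \<ge> 1"
  then obtain L where L: "k \<le> 3^L" "real L + 1 \<le> 4 * ln (real k + 1)"
    using exists_pow3_ge_log_bound by blast
  have "2 * delta k \<le> k" "int k \<le> 2 * int (delta k) + int L + 1"
    using delta_bounds[of k] delta_f_f3_ge[OF L(1)] by linarith+
  hence "\<bar>real (delta k) - real k / 2\<bar> \<le> (real L + 1) / 2" by (simp add: abs_le_iff)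
  also have "\<dots> \<le> 2 * ln (real k + 1)" using L(2) by (simp add: divide_le_eq)
  finally show "\<bar>real (delta k) - real k / 2\<bar> \<le> 2 * ln (real k + 1)" .
qed

end
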